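(* Let $g,h:\mathbb R\to\mathbb R$ be Borel functions and let $\mathcal R_{g,h}$ be the set of all products $\varrho_1\times\varrho_2$ of Borel probability measures on $\mathbb R$ with respect to which $g$ and $h$ are weakly comonotonic. Let $\mathcal R_{\rm c}=\{\delta_x\times\delta_{x'}:x,x'\in\mathbb R\}$ and $\mathcal R_{\rm a}=\{\delta_x\times\delta_x:x\in\mathbb R\}$. Then: (i) $\mathcal R_{g,h}\supseteq\mathcal R_{\rm c}$ if and only if $g$ and $h$ are strongly comonotonic; (ii) $\mathcal R_{g,h}=\mathcal R_{\rm a}$ if and only if $g$ and $h$ are strongly antimonotonic and injective on $\mathbb R$.
   Context: $\delta_x$ denotes the point mass at $x$. Functions $g,h$ are weakly comonotonic with respect to a product measure $\varrho_1\times\varrho_2$ on $(\mathbb R^2,\mathcal B(\mathbb R)\otimes\mathcal B(\mathbb R))$ if the integral $\iint_{\mathbb R^2}(g(x)-g(x'))(h(x)-h(x'))\,\varrho_1(\mathrm dx)\varrho_2(\mathrm dx')$ exists and is $\ge0$. $g$ and $h$ are strongly comonotonic if $(g(x)-g(x'))(h(x)-h(x'))\ge0$ for all $x,x'\in\mathbb R$, and strongly antimonotonic if $(g(x)-g(x'))(h(x)-h(x'))\le0$ for all $x,x'\in\mathbb R$. *)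

theory Defs
  imports "HOL-Probability.Probability"
begin

definition comon_integrand :: "(real \<Rightarrow> real) \<Rightarrow> (real \<Rightarrow> real) \<Rightarrow> real \<times> real \<Rightarrow> real" where
  "comon_integrand g h = (\<lambda>(x, x'). (g x - g x') * (h x - h x'))"

text \<open>The integral of the integrand exists (in the extended sense: positive or negative
  part has finite integral) and is nonnegative.\<close>
definition weakly_comonotonic :: "(real \<Rightarrow> real) \<Rightarrow> (real \<Rightarrow> real) \<Rightarrow> (real \<times> real) measure \<Rightarrow> bool" where
  "weakly_comonotonic g h M \<longleftrightarrow>
     ((\<integral>\<^sup>+ z. ennreal (comon_integrand g h z) \<partial>M) < \<infinity> \<or>
      (\<integral>\<^sup>+ z. ennreal (- comon_integrand g h z) \<partial>M) < \<infinity>) \<and>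
     (\<integral>\<^sup>+ z. ennreal (- comon_integrand g h z) \<partial>M) \<le> (\<integral>\<^sup>+ z. ennreal (comon_integrand g h z) \<partial>M)"

definition strongly_comonotonic :: "(real \<Rightarrow> real) \<Rightarrow> (real \<Rightarrow> real) \<Rightarrow> bool" where
  "strongly_comonotonic g h \<longleftrightarrow> (\<forall>x x'. (g x - g x') * (h x - h x') \<ge> 0)"

definition strongly_antimonotonic :: "(real \<Rightarrow> real) \<Rightarrow> (real \<Rightarrow> real) \<Rightarrow> bool" where
  "strongly_antimonotonic g h \<longleftrightarrow> (\<forall>x x'. (g x - g x') * (h x - h x') \<le> 0)"

definition borel_prob :: "real measure \<Rightarrow> bool" where
  "borel_prob M \<longleftrightarrow> prob_space M \<and> sets M = sets borel"

definition R_gh :: "(real \<Rightarrow> real) \<Rightarrow> (real \<Rightarrow> real) \<Rightarrow> (real \<times> real) measure set" where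
  "R_gh g h = {\<rho>1 \<Otimes>\<^sub>M \<rho>2 | \<rho>1 \<rho>2. borel_prob \<rho>1 \<and> borel_prob \<rho>2 \<and>
                 weakly_comonotonic g h (\<rho>1 \<Otimes>\<^sub>M \<rho>2)}"

definition R_c :: "(real \<times> real) measure set" where
  "R_c = {return borel x \<Otimes>\<^sub>M return borel x' | x x'. True}"

definition R_a :: "(real \<times> real) measure set" where
  "R_a = {return borel x \<Otimes>\<^sub>M return borel x | x. True}"

end

theory Submission
  imports Defs
begin

(* For point masses the integral is the integrand at one point, so \<delta>x \<times> \<delta>x' lies in R_gh exactly
  when (g x - g x') (h x - h x') \<ge> 0; this gives (i) and R_a \<subseteq> R_gh. Hence R_gh \<subseteq> R_a forces
  that product to be nonnegative only on the diagonal, which means strong antimonotonicity together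
  with injectivity of g and h. Conversely, under this condition the integrand is \<le> 0 and vanishes only
  on the diagonal; weak comonotonicity then makes the negative part integrate to 0, so \<rho>1 \<times> \<rho>2 is
  concentrated on the diagonal, which is only possible for \<rho>1 = \<rho>2 = \<delta>x. *)

lemma comon_integrand_apply [simp]:
  "comon_integrand g h (x, x') = (g x - g x') * (h x - h x')"
  by (simp add: comon_integrand_def)

lemma borel_measurable_comon_integrand:
  assumes [measurable]: "g \<in> borel_measurable borel" "h \<in> borel_measurable borel"
  shows "comon_integrand g h \<in> borel_measurable (borel \<Otimes>\<^sub>M borel)"
  unfolding comon_integrand_def split_beta' by measurable

lemma comonotone_pairs_diagonal_iff:
  "(\<forall>x x'. 0 \<le> (g x - g x') * (h x - h x') \<longrightarrow> x = x') \<longleftrightarrow>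
   strongly_antimonotonic g h \<and> inj g \<and> inj h"
proof (intro iffI conjI allI impI)
  assume diag: "\<forall>x x'. 0 \<le> (g x - g x') * (h x - h x') \<longrightarrow> x = x'"
  show "strongly_antimonotonic g h"
    unfolding strongly_antimonotonic_def
  proof (intro allI)
    fix x x'
    show "(g x - g x') * (h x - h x') \<le> 0"
    proof (rule ccontr)
      assume pos: "\<not> ?thesis"
      then have "0 \<le> (g x - g x') * (h x - h x')" by simp
      with diag have "x = x'" by blast
      with pos show False by simp
    qed
  qed
  show "inj g" "inj h"
    by (rule injI, rule diag[rule_format], simp)+
next
  fix x x'
  assume asm: "strongly_antimonotonic g h \<and> inj g \<and> inj h"
    and "0 \<le> (g x - g x') * (h x - h x')"
  then have "(g x - g x') * (h x - h x') = 0"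
    unfolding strongly_antimonotonic_def by (meson order_antisym)
  then have "g x = g x' \<or> h x = h x'" by simp
  with asm show "x = x'"
    by (meson injD)
qed

lemma pair_measure_return:
  assumes "x \<in> space M" "y \<in> space N"
  shows "return M x \<Otimes>\<^sub>M return N y = return (M \<Otimes>\<^sub>M N) (x, y)"
  using assms
  by (intro pair_measure_eqI prob_space_imp_sigma_finite prob_space_return)
     (auto simp: indicator_times)

lemma return_pair_diagonal_imp_eq:
  assumes "return borel x \<Otimes>\<^sub>M return borel x' = return borel y \<Otimes>\<^sub>M return borel (y::real)"
  shows "x = x'"
proof -
  have "return (borel \<Otimes>\<^sub>M borel) (x, x') = return (borel \<Otimes>\<^sub>M borel) (y, y)"
    using assms by (simp add: pair_measure_return)
  then have "emeasure (return (borel \<Otimes>\<^sub>M borel) (x, x')) {(x, x')} =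
             emeasure (return (borel \<Otimes>\<^sub>M borel) (y, y)) {(x, x')}"
    by simp
  then show ?thesis
    by (simp add: borel_prod split: split_indicator_asm)
qed

lemma borel_prob_return: "borel_prob (return borel x)"
  by (simp add: borel_prob_def prob_space_return)

lemma weakly_comonotonic_return_pair_iff:
  assumes [measurable]: "g \<in> borel_measurable borel" "h \<in> borel_measurable borel"
  shows "weakly_comonotonic g h (return borel x \<Otimes>\<^sub>M return borel x') \<longleftrightarrow>
         0 \<le> (g x - g x') * (h x - h x')"
proof -
  note [measurable] = borel_measurable_comon_integrand[OF assms]
  have "(\<integral>\<^sup>+ z. ennreal (s * comon_integrand g h z) \<partial>return (borel \<Otimes>\<^sub>M borel) (x, x')) =
        ennreal (s * comon_integrand g h (x, x'))" for s :: real
    by (intro nn_integral_return) (auto simp: space_pair_measure)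
  from this[of 1] this[of "-1"] show ?thesis
    by (auto simp: weakly_comonotonic_def pair_measure_return ennreal_le_iff2)
qed

lemma return_pair_in_R_gh_iff:
  assumes "g \<in> borel_measurable borel" "h \<in> borel_measurable borel"
  shows "return borel x \<Otimes>\<^sub>M return borel x' \<in> R_gh g h \<longleftrightarrow> 0 \<le> (g x - g x') * (h x - h x')"
proof
  assume "return borel x \<Otimes>\<^sub>M return borel x' \<in> R_gh g h"
  then obtain \<rho>1 \<rho>2 where "return borel x \<Otimes>\<^sub>M return borel x' = \<rho>1 \<Otimes>\<^sub>M \<rho>2"
    and "weakly_comonotonic g h (\<rho>1 \<Otimes>\<^sub>M \<rho>2)"
    unfolding R_gh_def by blast
  then show "0 \<le> (g x - g x') * (h x - h x')"
    using weakly_comonotonic_return_pair_iff[OF assms] by metis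
next
  assume "0 \<le> (g x - g x') * (h x - h x')"
  then show "return borel x \<Otimes>\<^sub>M return borel x' \<in> R_gh g h"
    unfolding R_gh_def using weakly_comonotonic_return_pair_iff[OF assms] borel_prob_return by blast
qed

lemma borel_prob_eq_return_if_AE_eq:
  assumes "borel_prob \<rho>" "AE y in \<rho>. y = x"
  shows "\<rho> = return borel x"
proof -
  interpret prob_space \<rho> using assms(1) by (simp add: borel_prob_def)
  have "\<rho> = return \<rho> x" using assms(2) by (rule AE_eq_constD)
  also have "\<dots> = return borel x" using assms(1) by (intro return_cong) (simp add: borel_prob_def)
  finally show ?thesis .
qed

lemma borel_prob_pair_AE_diagonal:
  assumes "borel_prob \<rho>1" "borel_prob \<rho>2" "AE z in \<rho>1 \<Otimes>\<^sub>M \<rho>2. fst z = snd z"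
  obtains x where "\<rho>1 = return borel x" "\<rho>2 = return borel x"
proof -
  interpret \<rho>1: prob_space \<rho>1 using assms(1) by (simp add: borel_prob_def)
  interpret \<rho>2: prob_space \<rho>2 using assms(2) by (simp add: borel_prob_def)
  interpret pair_sigma_finite \<rho>1 \<rho>2 by unfold_locales
  have AE_AE: "AE x in \<rho>1. AE y in \<rho>2. x = y"
    using AE_pair[OF assms(3)] by simp
  then obtain x where "AE y in \<rho>2. x = y"
    using eventually_happens'[OF \<rho>1.ae_filter_bot] by blast
  then have \<rho>2_eq: "\<rho>2 = return borel x"
    by (intro borel_prob_eq_return_if_AE_eq assms(2)) (auto elim: eventually_mono)
  have "AE x' in \<rho>1. x' = x"
    using AE_AE unfolding \<rho>2_eq by (rule eventually_mono) (subst (asm) AE_return, auto)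
  then have "\<rho>1 = return borel x"
    by (intro borel_prob_eq_return_if_AE_eq assms(1))
  with \<rho>2_eq show thesis by (rule that[rotated])
qed

lemma weakly_comonotonic_AE_diagonal:
  assumes meas: "comon_integrand g h \<in> borel_measurable M"
    and wc: "weakly_comonotonic g h M"
    and diag: "\<And>z. 0 \<le> comon_integrand g h z \<Longrightarrow> fst z = snd z"
  shows "AE z in M. fst z = snd z"
proof -
  have "comon_integrand g h z \<le> 0" for z
  proof (rule ccontr)
    assume "\<not> ?thesis"
    then have "fst z = snd z" by (intro diag) simp
    with \<open>\<not> ?thesis\<close> show False by (cases z) simp
  qed
  then have "(\<integral>\<^sup>+ z. ennreal (comon_integrand g h z) \<partial>M) = 0"
    by (simp add: ennreal_neg)
  then have "(\<integral>\<^sup>+ z. ennreal (- comon_integrand g h z) \<partial>M) = 0"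
    using wc by (simp add: weakly_comonotonic_def)
  moreover have "(\<lambda>z. ennreal (- comon_integrand g h z)) \<in> borel_measurable M"
    using meas by measurable
  ultimately have "AE z in M. ennreal (- comon_integrand g h z) = 0"
    by (simp add: nn_integral_0_iff_AE)
  then show ?thesis
  proof (rule eventually_mono)
    fix z
    assume "ennreal (- comon_integrand g h z) = 0"
    then have "0 \<le> comon_integrand g h z" by (simp add: ennreal_eq_0_iff)
    then show "fst z = snd z" by (rule diag)
  qed
qed

lemma R_c_subset_R_gh_iff:
  assumes "g \<in> borel_measurable borel" "h \<in> borel_measurable borel"
  shows "R_c \<subseteq> R_gh g h \<longleftrightarrow> strongly_comonotonic g h"
  unfolding R_c_def strongly_comonotonic_def using return_pair_in_R_gh_iff[OF assms] by blast

lemma R_a_subset_R_gh: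
  assumes "g \<in> borel_measurable borel" "h \<in> borel_measurable borel"
  shows "R_a \<subseteq> R_gh g h"
  by (auto simp: R_a_def return_pair_in_R_gh_iff[OF assms])

lemma R_gh_subset_R_a_iff:
  assumes "g \<in> borel_measurable borel" "h \<in> borel_measurable borel"
  shows "R_gh g h \<subseteq> R_a \<longleftrightarrow> (\<forall>x x'. 0 \<le> (g x - g x') * (h x - h x') \<longrightarrow> x = x')"
proof (intro iffI allI impI subsetI)
  fix x x'
  assume "R_gh g h \<subseteq> R_a" and "0 \<le> (g x - g x') * (h x - h x')"
  then have "return borel x \<Otimes>\<^sub>M return borel x' \<in> R_a"
    using return_pair_in_R_gh_iff[OF assms] by blast
  then obtain y where "return borel x \<Otimes>\<^sub>M return borel x' = return borel y \<Otimes>\<^sub>M return borel y"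
    unfolding R_a_def by blast
  then show "x = x'" by (rule return_pair_diagonal_imp_eq)
next
  fix M
  assume diag: "\<forall>x x'. 0 \<le> (g x - g x') * (h x - h x') \<longrightarrow> x = x'" and "M \<in> R_gh g h"
  then obtain \<rho>1 \<rho>2 where M: "M = \<rho>1 \<Otimes>\<^sub>M \<rho>2" and \<rho>: "borel_prob \<rho>1" "borel_prob \<rho>2"
    and wc: "weakly_comonotonic g h M"
    unfolding R_gh_def by blast
  have sets_M: "sets M = sets (borel \<Otimes>\<^sub>M borel)"
    unfolding M using \<rho> by (intro sets_pair_measure_cong) (simp_all add: borel_prob_def)
  have meas: "comon_integrand g h \<in> borel_measurable M"
    using borel_measurable_comon_integrand[OF assms] unfolding measurable_cong_sets[OF sets_M refl] .
  have "fst z = snd z" if "0 \<le> comon_integrand g h z" for z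
    using diag[rule_format, of "fst z" "snd z"] that by (simp add: comon_integrand_def split_beta)
  then have "AE z in M. fst z = snd z"
    by (rule weakly_comonotonic_AE_diagonal[OF meas wc])
  with \<rho> obtain x where "\<rho>1 = return borel x" "\<rho>2 = return borel x"
    unfolding M by (rule borel_prob_pair_AE_diagonal)
  then show "M \<in> R_a" unfolding R_a_def M by blast
qed

lemma R_gh_eq_R_a_iff:
  assumes "g \<in> borel_measurable borel" "h \<in> borel_measurable borel"
  shows "R_gh g h = R_a \<longleftrightarrow> strongly_antimonotonic g h \<and> inj g \<and> inj h"
  using R_a_subset_R_gh[OF assms] R_gh_subset_R_a_iff[OF assms] comonotone_pairs_diagonal_iff
  by blast

theorem theorem4p1:
  fixes g h :: "real \<Rightarrow> real"
  assumes "g \<in> borel_measurable borel" and "h \<in> borel_measurable borel"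
  shows "(R_c \<subseteq> R_gh g h \<longleftrightarrow> strongly_comonotonic g h) \<and>
         (R_gh g h = R_a \<longleftrightarrow> strongly_antimonotonic g h \<and> inj g \<and> inj h)"
  using R_c_subset_R_gh_iff[OF assms] R_gh_eq_R_a_iff[OF assms] by blast

end
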